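(* Let $\Omega$, $\psi$, $\varphi$, $\Sigma$, $S$ and $\Phi$ be as in the context. Then $\Phi:\Sigma\times[0,S)\to\Omega$ is a bijection, $\Phi^{-1}$ is Borel measurable, and for every Borel set $\mathcal B\subset\Omega$, $$\mu_\Omega(\mathcal B)=\frac1S\,(\mu_\Sigma\otimes\lambda)\big(\Phi^{-1}(\mathcal B)\big).$$
   Context: $\Omega$ is a commutative (written additively), compact, metrizable topological group, and $\psi:\mathbb R\to\Omega$ is a continuous group homomorphism whose image $\psi(\mathbb R)$ is dense in $\Omega$. $\mu_\Omega$ denotes the Haar probability measure of $\Omega$ (the unique translation-invariant Borel probability measure) and $\lambda$ is Lebesgue measure on $\mathbb R$. Let $\varphi:\Omega\to\mathbb S^1=\{z\in\mathbb C:|z|=1\}$ be a nontrivial continuous homomorphism (character), and $\Sigma=\ker\varphi=\{\omega:\varphi(\omega)=1\}$, a compact subgroup with Haar probability measure $\mu_\Sigma$. There is a unique $\alpha\neq0$ with $\varphi(\psi(t))=e^{i\alpha t}$ for all $t\in\mathbb R$; put $S=2\pi/|\alpha|$. Define $\Phi:\Sigma\times[0,S)\to\Omega$ by $\Phi(\sigma,t)=\sigma+\psi(t)$. *)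

theory Defs
  imports "HOL-Analysis.Analysis" "HOL-Probability.Probability"
begin

text \<open>A commutative compact metrizable topological group is modelled as a type of class
  metric_space and ab_group_add (the metric is a chosen compatible metric) whose
  group operations are continuous and whose universe is compact.\<close>

definition compact_metric_ab_group :: "('a::{metric_space, ab_group_add}) itself \<Rightarrow> bool" where
  "compact_metric_ab_group _ \<longleftrightarrow>
     compact (UNIV :: 'a set) \<and>
     continuous_on UNIV (\<lambda>p::'a \<times> 'a. fst p + snd p) \<and>
     continuous_on UNIV (\<lambda>x::'a. - x)"

definition haar_prob :: "('a::{topological_space, ab_group_add}) set \<Rightarrow> 'a measure \<Rightarrow> bool" where
  "haar_prob K \<mu> \<longleftrightarrow>
     prob_space \<mu> \<and> space \<mu> = K \<and> sets \<mu> = sets (restrict_space borel K) \<and>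
     (\<forall>x\<in>K. \<forall>A\<in>sets \<mu>. emeasure \<mu> ((\<lambda>y. x + y) ` A) = emeasure \<mu> A)"

definition character :: "('a::{topological_space, ab_group_add} \<Rightarrow> complex) \<Rightarrow> bool" where
  "character \<phi> \<longleftrightarrow> continuous_on UNIV \<phi> \<and> (\<forall>x. norm (\<phi> x) = 1) \<and>
     (\<forall>x y. \<phi> (x + y) = \<phi> x * \<phi> y)"

end

theory Submission
  imports Defs
begin

text \<open>
  The inverse of \<open>\<Phi>\<close> is explicit: on the orbit of \<open>\<psi>\<close> the character is \<open>t \<mapsto> cis (\<alpha> t)\<close>,
  so the time coordinate of \<open>\<omega>\<close> is the argument of \<open>\<phi> \<omega>\<close> rescaled to \<open>[0, S)\<close>, and
  the base point is \<open>\<omega> - \<psi>(time)\<close>. This inverse is continuous off the closed set \<open>\<Sigma>\<close>,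
  where the argument jumps, and trivial on \<open>\<Sigma>\<close>; hence it is Borel.

  For the measure identity let \<open>J(\<omega>)\<close> be the \<open>(\<mu>\<^sub>\<Sigma> \<otimes> \<lambda>)\<close>-measure of
  \<open>\<Phi>\<^sup>-\<^sup>1(B - \<omega>)\<close>. By Fubini and the invariance of \<open>\<mu>\<^sub>\<Omega>\<close>,
  \<open>\<integral> J d\<mu>\<^sub>\<Omega> = \<mu>\<^sub>\<Omega>(B) S\<close>. On the other hand, writing \<open>\<omega> = \<sigma>\<^sub>0 + \<psi>(t\<^sub>0)\<close> and
  using the invariance of \<open>\<mu>\<^sub>\<Sigma>\<close> under \<open>\<sigma>\<^sub>0\<close>, \<open>J(\<omega>)\<close> is the integral over
  \<open>[t\<^sub>0, t\<^sub>0 + S)\<close> of \<open>s \<mapsto> \<mu>\<^sub>\<Sigma>(B - \<psi> s)\<close>, which is \<open>S\<close>-periodic because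
  \<open>\<psi> S \<in> \<Sigma>\<close>. So \<open>J\<close> is constant, equal to \<open>J(0) = (\<mu>\<^sub>\<Sigma> \<otimes> \<lambda>)(\<Phi>\<^sup>-\<^sup>1 B)\<close>.
\<close>

text \<open>
  The carrier type is not an instance of \<open>second_countable_topology\<close>, so the library's
  \<open>borel_prod\<close> does not apply to it; being compact metric, it is nevertheless second
  countable, which is what makes addition jointly measurable.
\<close>

lemma compact_UNIV_countable_basis:
  assumes "compact (UNIV :: 'a set)"
  obtains B :: "'a::metric_space set set" where "countable B" "topological_basis B"
proof -
  have "\<forall>n::nat. \<exists>k::'a set. finite k \<and> UNIV \<subseteq> (\<Union>x\<in>k. ball x (1 / Suc n))"
    using assms[unfolded compact_eq_totally_bounded] by simp
  then obtain k :: "nat \<Rightarrow> 'a set"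
    where k: "\<And>n. finite (k n)" "\<And>n. UNIV \<subseteq> (\<Union>x\<in>k n. ball x (1 / Suc n))"
    by (auto dest!: choice)
  define B where "B = (\<Union>n. (\<lambda>x. ball x (1 / Suc n)) ` k n)"
  have "countable B"
    unfolding B_def by (intro countable_UN[OF countableI_type] countable_image countable_finite k)
  moreover have "topological_basis B"
  proof (rule topological_basisI)
    fix U :: "'a set" and x assume "open U" "x \<in> U"
    then obtain e where e: "e > 0" "ball x e \<subseteq> U" by (meson openE)
    obtain n :: nat where n: "1 / Suc n < e / 2"
      using e(1) by (metis half_gt_zero_iff nat_approx_posE)
    obtain c where c: "c \<in> k n" "x \<in> ball c (1 / Suc n)" using k(2)[of n] by blast
    have "ball c (1 / Suc n) \<subseteq> ball x e"
    proof
      fix y assume "y \<in> ball c (1 / Suc n)"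
      then show "y \<in> ball x e"
        using c(2) n dist_triangle[of x y c] by (simp add: dist_commute)
    qed
    then show "\<exists>B'\<in>B. x \<in> B' \<and> B' \<subseteq> U" using c e unfolding B_def by blast
  qed (auto simp: B_def)
  ultimately show thesis by (rule that)
qed

lemma open_in_sets_pair_borel:
  fixes W :: "('a::topological_space \<times> 'b::topological_space) set"
    and Ba :: "'a set set" and Bb :: "'b set set"
  assumes "countable Ba" "topological_basis Ba" "countable Bb" "topological_basis Bb"
    and "open W"
  shows "W \<in> sets (borel \<Otimes>\<^sub>M borel)"
proof -
  define C where "C = {U \<times> V | U V. U \<in> Ba \<and> V \<in> Bb \<and> U \<times> V \<subseteq> W}"
  have "C \<subseteq> (\<lambda>(U, V). U \<times> V) ` (Ba \<times> Bb)" unfolding C_def by auto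
  moreover have "countable ((\<lambda>(U, V). U \<times> V) ` (Ba \<times> Bb))"
    using assms(1,3) by simp
  ultimately have "countable C" by (rule countable_subset)
  moreover have "C \<subseteq> sets (borel \<Otimes>\<^sub>M borel)"
    unfolding C_def using assms(2,4) by (auto intro!: pair_measureI borel_open simp: topological_basis_open)
  ultimately have "\<Union>C \<in> sets (borel \<Otimes>\<^sub>M borel)" by (rule sets.countable_Union)
  moreover have "\<Union>C = W"
  proof
    show "\<Union>C \<subseteq> W" unfolding C_def by auto
  next
    show "W \<subseteq> \<Union>C"
    proof
      fix p assume "p \<in> W"
      then obtain A A' where AA: "open A" "open A'" "p \<in> A \<times> A'" "A \<times> A' \<subseteq> W"
        using assms(5) by (metis open_prod_elim)
      obtain U where "U \<in> Ba" "fst p \<in> U" "U \<subseteq> A"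
        using topological_basisE[OF assms(2) AA(1)] AA(3) by (metis mem_Times_iff)
      moreover obtain V where "V \<in> Bb" "snd p \<in> V" "V \<subseteq> A'"
        using topological_basisE[OF assms(4) AA(2)] AA(3) by (metis mem_Times_iff)
      ultimately have "U \<times> V \<in> C" "p \<in> U \<times> V"
        using AA(4) unfolding C_def by (blast, simp add: mem_Times_iff)
      then show "p \<in> \<Union>C" by blast
    qed
  qed
  ultimately show ?thesis by simp
qed

lemma borel_measurable_continuous_Pair_countable_basis:
  fixes h :: "'a::topological_space \<times> 'b::topological_space \<Rightarrow> 'c::topological_space"
    and Ba :: "'a set set" and Bb :: "'b set set"
  assumes "countable Ba" "topological_basis Ba" "countable Bb" "topological_basis Bb"
    and "continuous_on UNIV h"
    and "f \<in> borel_measurable M" "g \<in> borel_measurable M"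
  shows "(\<lambda>x. h (f x, g x)) \<in> borel_measurable M"
proof -
  have "(\<lambda>x. (f x, g x)) \<in> measurable M (borel \<Otimes>\<^sub>M borel)"
    using assms(6,7) by (rule measurable_Pair)
  moreover have "(\<lambda>p. p) \<in> measurable (borel \<Otimes>\<^sub>M borel) (borel :: ('a \<times> 'b) measure)"
  proof (rule borel_measurableI)
    fix W :: "('a \<times> 'b) set" assume "open W"
    then show "(\<lambda>p. p) -` W \<inter> space (borel \<Otimes>\<^sub>M borel) \<in> sets (borel \<Otimes>\<^sub>M borel)"
      using open_in_sets_pair_borel[OF assms(1-4)] by (simp add: space_pair_measure)
  qed
  ultimately have "(\<lambda>x. (f x, g x)) \<in> borel_measurable M" by (rule measurable_compose)
  then show ?thesis using borel_measurable_continuous_onI[OF assms(5)] by (rule measurable_compose)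
qed

lemma borel_measurable_add_compact:
  fixes f g :: "'b \<Rightarrow> 'a::{metric_space, plus}"
  assumes "compact (UNIV :: 'a set)" "continuous_on UNIV (\<lambda>p::'a \<times> 'a. fst p + snd p)"
    and "f \<in> borel_measurable M" "g \<in> borel_measurable M"
  shows "(\<lambda>x. f x + g x) \<in> borel_measurable M"
proof -
  obtain B :: "'a set set" where "countable B" "topological_basis B"
    using compact_UNIV_countable_basis[OF assms(1)] .
  from borel_measurable_continuous_Pair_countable_basis[OF this this assms(2-4)]
  show ?thesis by simp
qed

definition Arg2pi_scaled :: "real \<Rightarrow> complex \<Rightarrow> real" where
  "Arg2pi_scaled a z = Arg2pi (if a > 0 then z else cnj z) / \<bar>a\<bar>"

lemma Arg2pi_scaled_bounds:
  assumes "a \<noteq> 0"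
  shows "0 \<le> Arg2pi_scaled a z" "Arg2pi_scaled a z < 2 * pi / \<bar>a\<bar>"
  using Arg2pi[of "if a > 0 then z else cnj z"] assms
  by (auto simp: Arg2pi_scaled_def divide_strict_right_mono)

lemma cis_Arg2pi_scaled:
  assumes "a \<noteq> 0" "norm z = 1"
  shows "cis (a * Arg2pi_scaled a z) = z"
proof -
  have unit: "cis (Arg2pi w) = w" if "norm w = 1" for w
    using that by (simp add: cis_conv_exp complex_norm_eq_1_exp)
  show ?thesis
  proof (cases "a > 0")
    case True
    then show ?thesis using unit[OF assms(2)] by (simp add: Arg2pi_scaled_def)
  next
    case False
    then have "cis (a * Arg2pi_scaled a z) = cnj (cis (Arg2pi (cnj z)))"
      using assms(1) by (simp add: Arg2pi_scaled_def cis_cnj)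
    then show ?thesis using unit[of "cnj z"] assms(2) by simp
  qed
qed

lemma Arg2pi_scaled_cis:
  assumes "0 \<le> t" "t < 2 * pi / \<bar>a\<bar>"
  shows "Arg2pi_scaled a (cis (a * t)) = t"
proof -
  have "a \<noteq> 0" using assms by auto
  have "(if a > 0 then cis (a * t) else cnj (cis (a * t))) = cis (\<bar>a\<bar> * t)"
    by (auto simp: cis_cnj)
  moreover have "Arg2pi (cis (\<bar>a\<bar> * t)) = \<bar>a\<bar> * t"
  proof (rule Arg2pi_unique[of 1])
    show "\<bar>a\<bar> * t < 2 * pi" using assms \<open>a \<noteq> 0\<close> by (simp add: field_simps)
  qed (use assms in \<open>simp_all add: cis_conv_exp\<close>)
  ultimately show ?thesis using \<open>a \<noteq> 0\<close> by (simp add: Arg2pi_scaled_def)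
qed

lemma continuous_on_Arg2pi_scaled: "continuous_on (- \<real>\<^sub>\<ge>\<^sub>0) (Arg2pi_scaled a)"
proof -
  have Arg2pi: "continuous_on (- \<real>\<^sub>\<ge>\<^sub>0) Arg2pi"
    using continuous_at_Arg2pi continuous_at_imp_continuous_within
    by (auto simp: continuous_on_eq_continuous_within)
  have "cnj z \<notin> \<real>\<^sub>\<ge>\<^sub>0" if "z \<notin> \<real>\<^sub>\<ge>\<^sub>0" for z
  proof
    assume "cnj z \<in> \<real>\<^sub>\<ge>\<^sub>0"
    then obtain r where "0 \<le> r" "cnj z = of_real r" by (rule nonneg_Reals_cases)
    then have "z = of_real r" by (simp add: complex_eq_iff)
    with \<open>0 \<le> r\<close> have "z \<in> \<real>\<^sub>\<ge>\<^sub>0" by simp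
    with that show False by simp
  qed
  then have "continuous_on (- \<real>\<^sub>\<ge>\<^sub>0) (\<lambda>z. Arg2pi (cnj z))"
    by (intro continuous_on_compose2[OF Arg2pi continuous_on_cnj[OF continuous_on_id]]) auto
  with Arg2pi show ?thesis
    unfolding Arg2pi_scaled_def divide_inverse by (cases "a > 0") (auto intro!: continuous_intros)
qed

lemma character_zero: "character \<phi> \<Longrightarrow> \<phi> 0 = 1"
  unfolding character_def
  by (metis add_0 mult_cancel_left1 norm_zero zero_neq_one)

lemma character_uminus:
  assumes "character \<phi>"
  shows "\<phi> (- x) = cnj (\<phi> x)"
proof -
  have "\<phi> (- x) * \<phi> x = 1"
    using assms character_zero[OF assms] unfolding character_def by (metis add.left_inverse)
  moreover have "cnj (\<phi> x) * \<phi> x = 1"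
    using assms complex_norm_square[of "\<phi> x"] unfolding character_def by (simp add: mult.commute)
  moreover have "\<phi> x \<noteq> 0" using assms unfolding character_def by (metis norm_zero zero_neq_one)
  ultimately show ?thesis by (metis mult_right_cancel)
qed

lemma nn_integral_periodic_translate:
  fixes h :: "real \<Rightarrow> ennreal"
  assumes [measurable]: "h \<in> borel_measurable borel"
    and periodic: "\<And>s. h (s + p) = h s" and "0 \<le> c" "c \<le> p"
  shows "(\<integral>\<^sup>+t. h (c + t) * indicator {0..<p} t \<partial>lborel) = (\<integral>\<^sup>+t. h t * indicator {0..<p} t \<partial>lborel)"
proof -
  have "(\<integral>\<^sup>+t. h (c + t) * indicator {0..<p} t \<partial>lborel) = (\<integral>\<^sup>+t. h t * indicator {c..<p + c} t \<partial>lborel)"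
    using nn_integral_real_affine[of "\<lambda>t. h t * indicator {c..<p + c} t" 1 c]
    by (simp add: indicator_def)
  also have "\<dots> = (\<integral>\<^sup>+t. h t * indicator {c..<p} t \<partial>lborel) + (\<integral>\<^sup>+t. h t * indicator {p..<p + c} t \<partial>lborel)"
    using assms(3,4) by (subst nn_integral_add[symmetric]) (auto intro!: nn_integral_cong simp: indicator_def)
  also have "(\<integral>\<^sup>+t. h t * indicator {p..<p + c} t \<partial>lborel) = (\<integral>\<^sup>+t. h t * indicator {0..<c} t \<partial>lborel)"
    using nn_integral_real_affine[of "\<lambda>t. h t * indicator {p..<p + c} t" 1 p]
    by (simp add: indicator_def periodic add.commute)
  also have "(\<integral>\<^sup>+t. h t * indicator {c..<p} t \<partial>lborel) + \<dots> = (\<integral>\<^sup>+t. h t * indicator {0..<p} t \<partial>lborel)"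
    using assms(3,4) by (subst nn_integral_add[symmetric]) (auto intro!: nn_integral_cong simp: indicator_def)
  finally show ?thesis .
qed

lemma haar_prob_nn_integral_indicator_translate:
  fixes K :: "'a::{topological_space, ab_group_add} set"
  assumes haar: "haar_prob K \<mu>"
    and subgroup: "\<And>x y. x \<in> K \<Longrightarrow> y \<in> K \<Longrightarrow> x + y \<in> K" "\<And>x. x \<in> K \<Longrightarrow> - x \<in> K"
    and "a \<in> K" and "continuous_on UNIV (\<lambda>x. a + x)" and "A \<in> sets borel"
  shows "(\<integral>\<^sup>+x. indicator A (a + x) \<partial>\<mu>) = (\<integral>\<^sup>+x. indicator A x \<partial>\<mu>)"
proof -
  have space: "space \<mu> = K" and sets: "sets \<mu> = (\<inter>) K ` sets borel"
    and invariant: "\<And>x C. x \<in> K \<Longrightarrow> C \<in> sets \<mu> \<Longrightarrow> emeasure \<mu> ((\<lambda>y. x + y) ` C) = emeasure \<mu> C"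
    using haar by (auto simp: haar_prob_def sets_restrict_space)
  define C where "C = K \<inter> (\<lambda>x. a + x) -` A"
  have "(\<lambda>x. a + x) -` A \<in> sets borel"
    using borel_measurable_continuous_onI[OF assms(5)] assms(6) by (rule measurable_sets_borel)
  then have C_sets: "C \<in> sets \<mu>" unfolding C_def sets by blast
  have AK_sets: "K \<inter> A \<in> sets \<mu>" unfolding sets using assms(6) by blast
  have "C = (\<lambda>y. - a + y) ` (K \<inter> A)"
  proof
    show "C \<subseteq> (\<lambda>y. - a + y) ` (K \<inter> A)"
    proof
      fix x assume "x \<in> C"
      then have "a + x \<in> K \<inter> A" using subgroup \<open>a \<in> K\<close> by (auto simp: C_def)
      then show "x \<in> (\<lambda>y. - a + y) ` (K \<inter> A)" by (rule rev_image_eqI) simp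
    qed
    have "y - a \<in> K" if "y \<in> K" for y
      using subgroup that \<open>a \<in> K\<close> by (metis diff_conv_add_uminus)
    then show "(\<lambda>y. - a + y) ` (K \<inter> A) \<subseteq> C" by (auto simp: C_def)
  qed
  then have "emeasure \<mu> C = emeasure \<mu> (K \<inter> A)"
    using invariant[OF subgroup(2)[OF \<open>a \<in> K\<close>] AK_sets] by simp
  moreover have "(\<integral>\<^sup>+x. indicator A (a + x) \<partial>\<mu>) = (\<integral>\<^sup>+x. indicator C x \<partial>\<mu>)"
    by (auto intro!: nn_integral_cong simp: space C_def indicator_def)
  moreover have "(\<integral>\<^sup>+x. indicator A x \<partial>\<mu>) = (\<integral>\<^sup>+x. indicator (K \<inter> A) x \<partial>\<mu>)"
    by (auto intro!: nn_integral_cong simp: space indicator_def)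
  ultimately show ?thesis using C_sets AK_sets by simp
qed

locale dense_character_flow = additive \<psi>
  for \<psi> :: "real \<Rightarrow> 'a::{metric_space, ab_group_add}" +
  fixes \<phi> :: "'a \<Rightarrow> complex" and \<alpha> :: real
  assumes compact_group: "compact_metric_ab_group TYPE('a)"
    and continuous_\<psi>: "continuous_on UNIV \<psi>"
    and dense_\<psi>: "closure (range \<psi>) = UNIV"
    and character_\<phi>: "character \<phi>"
    and nontrivial_\<phi>: "\<exists>\<omega>. \<phi> \<omega> \<noteq> 1"
    and \<phi>_\<psi>: "\<And>t. \<phi> (\<psi> t) = cis (\<alpha> * t)"
begin

definition ker :: "'a set" where "ker = {\<omega>. \<phi> \<omega> = 1}"

definition period :: real where "period = 2 * pi / \<bar>\<alpha>\<bar>"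

definition flow_time :: "'a \<Rightarrow> real" where "flow_time \<omega> = Arg2pi_scaled \<alpha> (\<phi> \<omega>)"

definition flow_base :: "'a \<Rightarrow> 'a" where "flow_base \<omega> = \<omega> - \<psi> (flow_time \<omega>)"

lemma compact_UNIV: "compact (UNIV :: 'a set)"
  and continuous_on_add: "continuous_on UNIV (\<lambda>p::'a \<times> 'a. fst p + snd p)"
  and continuous_on_uminus: "continuous_on UNIV (\<lambda>x::'a. - x)"
  using compact_group by (simp_all add: compact_metric_ab_group_def)

lemma continuous_on_group_diff:
  fixes f g :: "'b::topological_space \<Rightarrow> 'a"
  assumes "continuous_on S f" "continuous_on S g"
  shows "continuous_on S (\<lambda>x. f x - g x)"
proof -
  have "continuous_on S (\<lambda>x. (f x, - g x))"
    using assms continuous_on_compose2[OF continuous_on_uminus assms(2)] by (auto intro: continuous_on_Pair)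
  from continuous_on_compose2[OF continuous_on_add this] show ?thesis by simp
qed

lemma borel_measurable_group_add [measurable (raw)]:
  fixes f g :: "'b \<Rightarrow> 'a"
  assumes "f \<in> borel_measurable M" "g \<in> borel_measurable M"
  shows "(\<lambda>x. f x + g x) \<in> borel_measurable M"
  by (rule borel_measurable_add_compact[OF compact_UNIV continuous_on_add assms])

lemma borel_measurable_\<psi> [measurable]: "\<psi> \<in> borel_measurable borel"
  by (rule borel_measurable_continuous_onI[OF continuous_\<psi>])

lemma \<phi>_add: "\<phi> (x + y) = \<phi> x * \<phi> y"
  using character_\<phi> by (simp add: character_def)

lemma ker_add: "x \<in> ker \<Longrightarrow> y \<in> ker \<Longrightarrow> x + y \<in> ker"
  by (simp add: ker_def \<phi>_add)

lemma ker_uminus: "x \<in> ker \<Longrightarrow> - x \<in> ker"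
  by (simp add: ker_def character_uminus[OF character_\<phi>])

lemma closed_ker: "closed ker"
  using character_\<phi> closed_Collect_eq[OF _ continuous_on_const, of \<phi> 1]
  by (simp add: ker_def character_def)

lemma \<alpha>_nonzero: "\<alpha> \<noteq> 0"
proof
  assume "\<alpha> = 0"
  then have "range \<psi> \<subseteq> ker" by (auto simp: ker_def \<phi>_\<psi>)
  then have "UNIV \<subseteq> ker" using closure_minimal[OF _ closed_ker] dense_\<psi> by metis
  then show False using nontrivial_\<phi> by (auto simp: ker_def)
qed

lemma period_pos: "period > 0"
  using \<alpha>_nonzero by (simp add: period_def)

lemma \<psi>_period: "\<psi> period \<in> ker"
proof -
  have "\<alpha> * period = 2 * pi \<or> \<alpha> * period = - (2 * pi)"
    using \<alpha>_nonzero by (cases "\<alpha> > 0") (auto simp: period_def)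
  then show ?thesis by (auto simp: ker_def \<phi>_\<psi> complex_eq_iff)
qed

lemma flow_time_bounds: "0 \<le> flow_time \<omega>" "flow_time \<omega> < period"
  using Arg2pi_scaled_bounds[OF \<alpha>_nonzero] by (simp_all add: flow_time_def period_def)

lemma norm_\<phi>: "norm (\<phi> \<omega>) = 1"
  using character_\<phi> by (simp add: character_def)

lemma flow_base_in_ker: "flow_base \<omega> \<in> ker"
proof -
  have "\<phi> (flow_base \<omega>) = \<phi> \<omega> * cnj (\<phi> (\<psi> (flow_time \<omega>)))"
    by (simp only: flow_base_def diff_conv_add_uminus \<phi>_add character_uminus[OF character_\<phi>])
  also have "\<phi> (\<psi> (flow_time \<omega>)) = \<phi> \<omega>"
    using norm_\<phi> by (simp add: \<phi>_\<psi> flow_time_def cis_Arg2pi_scaled[OF \<alpha>_nonzero])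
  also have "\<phi> \<omega> * cnj (\<phi> \<omega>) = 1"
    using complex_norm_square[of "\<phi> \<omega>"] norm_\<phi> by simp
  finally show ?thesis by (simp add: ker_def)
qed

lemma flow_time_flow:
  assumes "\<sigma> \<in> ker" "0 \<le> t" "t < period"
  shows "flow_time (\<sigma> + \<psi> t) = t"
  using assms Arg2pi_scaled_cis[of t \<alpha>] by (simp add: flow_time_def period_def ker_def \<phi>_add \<phi>_\<psi>)

lemma flow_time_ker: "\<sigma> \<in> ker \<Longrightarrow> flow_time \<sigma> = 0"
  using flow_time_flow[of \<sigma> 0] period_pos by (simp add: zero)

lemma bij_betw_flow: "bij_betw (\<lambda>(\<sigma>, t). \<sigma> + \<psi> t) (ker \<times> {0..<period}) UNIV"
proof (rule bij_betw_imageI)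
  show "inj_on (\<lambda>(\<sigma>, t). \<sigma> + \<psi> t) (ker \<times> {0..<period})"
  proof (rule inj_onI, clarsimp)
    fix \<sigma> t \<sigma>' t'
    assume "\<sigma> + \<psi> t = \<sigma>' + \<psi> t'" "\<sigma> \<in> ker" "\<sigma>' \<in> ker"
      "0 \<le> t" "t < period" "0 \<le> t'" "t' < period"
    moreover from this have "t = t'" using flow_time_flow by metis
    ultimately show "\<sigma> = \<sigma>' \<and> t = t'" by simp
  qed
  show "(\<lambda>(\<sigma>, t). \<sigma> + \<psi> t) ` (ker \<times> {0..<period}) = UNIV"
  proof safe
    fix \<omega> :: 'a
    have "\<omega> = flow_base \<omega> + \<psi> (flow_time \<omega>)" by (simp add: flow_base_def)
    then show "\<omega> \<in> (\<lambda>(\<sigma>, t). \<sigma> + \<psi> t) ` (ker \<times> {0..<period})"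
      using flow_base_in_ker flow_time_bounds by force
  qed auto
qed

lemma the_inv_into_flow:
  "the_inv_into (ker \<times> {0..<period}) (\<lambda>(\<sigma>, t). \<sigma> + \<psi> t) = (\<lambda>\<omega>. (flow_base \<omega>, flow_time \<omega>))"
  using flow_base_in_ker flow_time_bounds
  by (intro ext the_inv_into_f_eq[OF bij_betw_imp_inj_on[OF bij_betw_flow]]) (simp_all add: flow_base_def)

lemma continuous_on_flow_time: "continuous_on (- ker) flow_time"
proof -
  have "\<phi> \<omega> \<notin> \<real>\<^sub>\<ge>\<^sub>0" if "\<omega> \<notin> ker" for \<omega>
  proof
    assume "\<phi> \<omega> \<in> \<real>\<^sub>\<ge>\<^sub>0"
    then obtain r where "0 \<le> r" "\<phi> \<omega> = of_real r" by (rule nonneg_Reals_cases)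
    with norm_\<phi>[of \<omega>] have "\<phi> \<omega> = 1" by simp
    with that show False by (simp add: ker_def)
  qed
  moreover have "continuous_on (- ker) \<phi>"
    using character_\<phi> by (auto simp: character_def intro: continuous_on_subset)
  ultimately show ?thesis
    unfolding flow_time_def
    by (intro continuous_on_compose2[OF continuous_on_Arg2pi_scaled]) auto
qed

lemma borel_measurable_flow_inverse:
  "(\<lambda>\<omega>. (flow_base \<omega>, flow_time \<omega>)) \<in> borel_measurable borel"
proof -
  have "continuous_on (- ker) (\<lambda>\<omega>. \<psi> (flow_time \<omega>))"
    using continuous_on_compose2[OF continuous_\<psi> continuous_on_flow_time] by simp
  then have "continuous_on (- ker) flow_base"
    unfolding flow_base_def by (intro continuous_on_group_diff continuous_on_id)
  moreover have "(\<lambda>\<omega>. (flow_base \<omega>, flow_time \<omega>)) = (\<lambda>\<omega>. if \<omega> \<in> ker then (\<omega>, 0) else (flow_base \<omega>, flow_time \<omega>))"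
    by (auto simp: fun_eq_iff flow_time_ker flow_base_def zero)
  ultimately show ?thesis
    using closed_ker continuous_on_flow_time
    by (auto intro!: borel_measurable_continuous_on_if continuous_intros borel_closed)
qed

end

locale haar_flow = dense_character_flow +
  fixes \<mu>\<Omega> \<mu>\<Sigma> :: "'a measure"
  assumes haar_UNIV: "haar_prob UNIV \<mu>\<Omega>"
    and haar_kernel: "haar_prob {\<omega>. \<phi> \<omega> = 1} \<mu>\<Sigma>"
begin

lemma haar_ker: "haar_prob ker \<mu>\<Sigma>"
  using haar_kernel by (simp add: ker_def)

lemma sets_\<mu>\<Omega> [measurable_cong]: "sets \<mu>\<Omega> = sets borel"
  and space_\<mu>\<Omega>: "space \<mu>\<Omega> = UNIV"
  using haar_UNIV by (simp_all add: haar_prob_def)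

lemma sets_\<mu>\<Sigma> [measurable_cong]: "sets \<mu>\<Sigma> = sets (restrict_space borel ker)"
  and space_\<mu>\<Sigma>: "space \<mu>\<Sigma> = ker"
  using haar_ker by (simp_all add: haar_prob_def)

sublocale Omega: prob_space \<mu>\<Omega>
  using haar_UNIV by (simp add: haar_prob_def)

sublocale Ker: prob_space \<mu>\<Sigma>
  using haar_ker by (simp add: haar_prob_def)

sublocale Ker_lborel: pair_sigma_finite \<mu>\<Sigma> lborel
  by (intro pair_sigma_finite.intro Ker.sigma_finite_measure_axioms lborel.sigma_finite_measure_axioms)

sublocale Omega_Ker_lborel: pair_sigma_finite \<mu>\<Omega> "\<mu>\<Sigma> \<Otimes>\<^sub>M lborel"
  by (intro pair_sigma_finite.intro Omega.sigma_finite_measure_axioms Ker_lborel.sigma_finite_measure_axioms)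

lemma measurable_ident_\<mu>\<Sigma> [measurable]: "(\<lambda>x. x) \<in> borel_measurable \<mu>\<Sigma>"
  by (subst measurable_cong_sets[OF sets_\<mu>\<Sigma> refl])
    (rule measurable_restrict_space1[OF measurable_ident_sets[OF refl]])

lemma continuous_on_translate: "continuous_on UNIV (\<lambda>x::'a. a + x)"
  using continuous_on_compose2[OF continuous_on_add, of UNIV "\<lambda>x. (a, x)"]
  by (simp add: continuous_on_Pair)

lemma nn_integral_\<mu>\<Omega>_translate:
  assumes "B \<in> sets borel"
  shows "(\<integral>\<^sup>+x. indicator B (x + c) \<partial>\<mu>\<Omega>) = emeasure \<mu>\<Omega> B"
proof -
  have "(\<integral>\<^sup>+x. indicator B (x + c) \<partial>\<mu>\<Omega>) = (\<integral>\<^sup>+x. indicator B (c + x) \<partial>\<mu>\<Omega>)"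
    by (simp add: add.commute)
  also have "\<dots> = (\<integral>\<^sup>+x. indicator B x \<partial>\<mu>\<Omega>)"
    using haar_prob_nn_integral_indicator_translate[OF haar_UNIV _ _ UNIV_I continuous_on_translate assms]
    by simp
  finally show ?thesis using assms by (simp add: sets_\<mu>\<Omega>)
qed

lemma nn_integral_\<mu>\<Sigma>_translate:
  assumes "a \<in> ker" "B \<in> sets borel"
  shows "(\<integral>\<^sup>+\<sigma>. indicator B (a + \<sigma> + c) \<partial>\<mu>\<Sigma>) = (\<integral>\<^sup>+\<sigma>. indicator B (\<sigma> + c) \<partial>\<mu>\<Sigma>)"
proof -
  have "(\<lambda>y. y + c) \<in> borel_measurable borel" by measurable
  then have "(\<lambda>y. y + c) -` B \<in> sets borel" using assms(2) by (rule measurable_sets_borel)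
  from haar_prob_nn_integral_indicator_translate[OF haar_ker ker_add ker_uminus assms(1)
      continuous_on_translate this]
  show ?thesis by (simp add: indicator_def)
qed

definition ker_translate_measure :: "'a set \<Rightarrow> real \<Rightarrow> ennreal" where
  "ker_translate_measure B s = (\<integral>\<^sup>+\<sigma>. indicator B (\<sigma> + \<psi> s) \<partial>\<mu>\<Sigma>)"

lemma borel_measurable_ker_translate_measure:
  assumes [measurable]: "B \<in> sets borel"
  shows "ker_translate_measure B \<in> borel_measurable borel"
proof -
  have "(\<lambda>p. indicator B (snd p + \<psi> (fst p)) :: ennreal) \<in> borel_measurable (borel \<Otimes>\<^sub>M \<mu>\<Sigma>)"
    by measurable
  from Ker.borel_measurable_nn_integral_fst[OF this]
  show ?thesis unfolding ker_translate_measure_def by simp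
qed

lemma ker_translate_measure_periodic:
  "B \<in> sets borel \<Longrightarrow> ker_translate_measure B (s + period) = ker_translate_measure B s"
  using nn_integral_\<mu>\<Sigma>_translate[OF \<psi>_period, of B "\<psi> s"]
  by (simp add: ker_translate_measure_def add ac_simps)

definition shifted_preimage_measure :: "'a set \<Rightarrow> 'a \<Rightarrow> ennreal" where
  "shifted_preimage_measure B \<omega> =
     (\<integral>\<^sup>+(\<sigma>, t). indicator B (\<omega> + \<sigma> + \<psi> t) * indicator {0..<period} t \<partial>(\<mu>\<Sigma> \<Otimes>\<^sub>M lborel))"

lemma borel_measurable_shifted_preimage_integrand:
  assumes [measurable]: "B \<in> sets borel"
  shows "(\<lambda>(\<omega>, \<sigma>, t). indicator B (\<omega> + \<sigma> + \<psi> t) * indicator {0..<period} t :: ennreal)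
    \<in> borel_measurable (\<mu>\<Omega> \<Otimes>\<^sub>M (\<mu>\<Sigma> \<Otimes>\<^sub>M lborel))"
  by measurable

lemma ker_sets: "ker \<in> sets \<mu>\<Sigma>"
  using sets.top[of \<mu>\<Sigma>] by (simp add: space_\<mu>\<Sigma>)

lemma emeasure_ker_times_period: "emeasure (\<mu>\<Sigma> \<Otimes>\<^sub>M lborel) (ker \<times> {0..<period}) = period"
proof -
  have "emeasure (\<mu>\<Sigma> \<Otimes>\<^sub>M lborel) (ker \<times> {0..<period}) = emeasure \<mu>\<Sigma> ker * emeasure lborel {0..<period}"
    using ker_sets by (intro lborel.emeasure_pair_measure_Times) simp_all
  then show ?thesis using Ker.emeasure_space_1 period_pos by (simp add: space_\<mu>\<Sigma>)
qed

lemma nn_integral_shifted_preimage_measure: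
  assumes [measurable]: "B \<in> sets borel"
  shows "(\<integral>\<^sup>+\<omega>. shifted_preimage_measure B \<omega> \<partial>\<mu>\<Omega>) = emeasure \<mu>\<Omega> B * period"
proof -
  have "(\<integral>\<^sup>+\<omega>. shifted_preimage_measure B \<omega> \<partial>\<mu>\<Omega>)
      = (\<integral>\<^sup>+(\<sigma>, t). (\<integral>\<^sup>+\<omega>. indicator B (\<omega> + \<sigma> + \<psi> t) * indicator {0..<period} t \<partial>\<mu>\<Omega>) \<partial>(\<mu>\<Sigma> \<Otimes>\<^sub>M lborel))"
    using Omega_Ker_lborel.Fubini[OF borel_measurable_shifted_preimage_integrand[OF assms]]
    by (simp add: shifted_preimage_measure_def split_beta')
  also have "\<dots> = (\<integral>\<^sup>+p. emeasure \<mu>\<Omega> B * indicator (ker \<times> {0..<period}) p \<partial>(\<mu>\<Sigma> \<Otimes>\<^sub>M lborel))"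
  proof (rule nn_integral_cong, clarify)
    fix \<sigma> and t :: real assume "(\<sigma>, t) \<in> space (\<mu>\<Sigma> \<Otimes>\<^sub>M lborel)"
    then have "\<sigma> \<in> ker" by (simp add: space_pair_measure space_\<mu>\<Sigma>)
    have "(\<integral>\<^sup>+\<omega>. indicator B (\<omega> + \<sigma> + \<psi> t) * indicator {0..<period} t \<partial>\<mu>\<Omega>)
        = (\<integral>\<^sup>+\<omega>. indicator B (\<omega> + (\<sigma> + \<psi> t)) * indicator {0..<period} t \<partial>\<mu>\<Omega>)"
      by (simp add: add.assoc)
    also have "\<dots> = (\<integral>\<^sup>+\<omega>. indicator B (\<omega> + (\<sigma> + \<psi> t)) \<partial>\<mu>\<Omega>) * indicator {0..<period} t"
      using borel_measurable_group_add[OF measurable_ident_sets[OF sets_\<mu>\<Omega>] measurable_const, of "\<sigma> + \<psi> t"] assms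
      by (intro nn_integral_multc measurable_compose[OF _ borel_measurable_indicator]) auto
    finally show "(\<integral>\<^sup>+\<omega>. indicator B (\<omega> + \<sigma> + \<psi> t) * indicator {0..<period} t \<partial>\<mu>\<Omega>)
        = emeasure \<mu>\<Omega> B * indicator (ker \<times> {0..<period}) (\<sigma>, t)"
      using \<open>\<sigma> \<in> ker\<close> by (simp add: nn_integral_\<mu>\<Omega>_translate[OF assms] indicator_times)
  qed
  also have "\<dots> = emeasure \<mu>\<Omega> B * period"
    using ker_sets by (simp add: nn_integral_cmult_indicator emeasure_ker_times_period space_\<mu>\<Sigma>)
  finally show ?thesis .
qed

lemma shifted_preimage_measure_eq_integral:
  assumes [measurable]: "B \<in> sets borel"
  shows "shifted_preimage_measure B \<omega>
    = (\<integral>\<^sup>+t. ker_translate_measure B (flow_time \<omega> + t) * indicator {0..<period} t \<partial>lborel)"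
proof -
  have "shifted_preimage_measure B \<omega>
      = (\<integral>\<^sup>+t. (\<integral>\<^sup>+\<sigma>. indicator B (\<omega> + \<sigma> + \<psi> t) * indicator {0..<period} t \<partial>\<mu>\<Sigma>) \<partial>lborel)"
    unfolding shifted_preimage_measure_def
    by (subst Ker_lborel.nn_integral_snd[symmetric]) (simp_all add: split_beta')
  also have "\<dots> = (\<integral>\<^sup>+t. ker_translate_measure B (flow_time \<omega> + t) * indicator {0..<period} t \<partial>lborel)"
  proof (rule nn_integral_cong)
    fix t
    have "\<omega> + \<sigma> + \<psi> t = flow_base \<omega> + \<sigma> + \<psi> (flow_time \<omega> + t)" for \<sigma>
      by (simp add: flow_base_def add algebra_simps)
    then have "(\<integral>\<^sup>+\<sigma>. indicator B (\<omega> + \<sigma> + \<psi> t) * indicator {0..<period} t \<partial>\<mu>\<Sigma>)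
        = (\<integral>\<^sup>+\<sigma>. indicator B (flow_base \<omega> + \<sigma> + \<psi> (flow_time \<omega> + t)) * indicator {0..<period} t \<partial>\<mu>\<Sigma>)"
      by (simp only:)
    also have "\<dots> = (\<integral>\<^sup>+\<sigma>. indicator B (flow_base \<omega> + \<sigma> + \<psi> (flow_time \<omega> + t)) \<partial>\<mu>\<Sigma>) * indicator {0..<period} t"
      by (rule nn_integral_multc) measurable
    finally
    show "(\<integral>\<^sup>+\<sigma>. indicator B (\<omega> + \<sigma> + \<psi> t) * indicator {0..<period} t \<partial>\<mu>\<Sigma>)
        = ker_translate_measure B (flow_time \<omega> + t) * indicator {0..<period} t"
      by (simp add: nn_integral_\<mu>\<Sigma>_translate[OF flow_base_in_ker] ker_translate_measure_def)
  qed
  finally show ?thesis .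
qed

lemma shifted_preimage_measure_const:
  assumes "B \<in> sets borel"
  shows "shifted_preimage_measure B \<omega> = shifted_preimage_measure B 0"
proof -
  have "flow_time 0 = 0"
    using flow_time_ker character_zero[OF character_\<phi>] by (simp add: ker_def)
  then show ?thesis
    using nn_integral_periodic_translate[OF borel_measurable_ker_translate_measure[OF assms]
        ker_translate_measure_periodic[OF assms]] flow_time_bounds[of \<omega>]
    by (simp add: shifted_preimage_measure_eq_integral[OF assms])
qed

lemma shifted_preimage_measure_zero:
  assumes [measurable]: "B \<in> sets borel"
  shows "shifted_preimage_measure B 0
    = emeasure (\<mu>\<Sigma> \<Otimes>\<^sub>M lborel) ((\<lambda>(\<sigma>, t). \<sigma> + \<psi> t) -` B \<inter> (ker \<times> {0..<period}))"
proof -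
  let ?P = "(\<lambda>(\<sigma>, t). \<sigma> + \<psi> t) -` B \<inter> (ker \<times> {0..<period})"
  have "(\<lambda>(\<sigma>, t). \<sigma> + \<psi> t) \<in> borel_measurable (\<mu>\<Sigma> \<Otimes>\<^sub>M lborel)" by measurable
  then have "(\<lambda>(\<sigma>, t). \<sigma> + \<psi> t) -` B \<inter> space (\<mu>\<Sigma> \<Otimes>\<^sub>M lborel) \<in> sets (\<mu>\<Sigma> \<Otimes>\<^sub>M lborel)"
    using assms by (rule measurable_sets)
  moreover have "ker \<times> {0..<period} \<in> sets (\<mu>\<Sigma> \<Otimes>\<^sub>M lborel)"
    using ker_sets by (intro pair_measureI) simp_all
  moreover have "?P = ((\<lambda>(\<sigma>, t). \<sigma> + \<psi> t) -` B \<inter> space (\<mu>\<Sigma> \<Otimes>\<^sub>M lborel)) \<inter> (ker \<times> {0..<period})"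
    by (auto simp: space_pair_measure space_\<mu>\<Sigma>)
  ultimately have P_sets: "?P \<in> sets (\<mu>\<Sigma> \<Otimes>\<^sub>M lborel)" by simp
  have "shifted_preimage_measure B 0 = (\<integral>\<^sup>+p. indicator ?P p \<partial>(\<mu>\<Sigma> \<Otimes>\<^sub>M lborel))"
    unfolding shifted_preimage_measure_def
    by (intro nn_integral_cong) (auto simp: space_pair_measure space_\<mu>\<Sigma> indicator_def)
  then show ?thesis using P_sets by simp
qed

lemma emeasure_haar_eq_flow_preimage:
  assumes "B \<in> sets borel"
  shows "emeasure \<mu>\<Omega> B
    = ennreal (1 / period) * emeasure (\<mu>\<Sigma> \<Otimes>\<^sub>M lborel) ((\<lambda>(\<sigma>, t). \<sigma> + \<psi> t) -` B \<inter> (ker \<times> {0..<period}))"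
proof -
  have "emeasure \<mu>\<Omega> B * period = (\<integral>\<^sup>+\<omega>. shifted_preimage_measure B \<omega> \<partial>\<mu>\<Omega>)"
    by (rule nn_integral_shifted_preimage_measure[OF assms, symmetric])
  also have "\<dots> = (\<integral>\<^sup>+\<omega>. shifted_preimage_measure B 0 \<partial>\<mu>\<Omega>)"
    by (rule nn_integral_cong) (rule shifted_preimage_measure_const[OF assms])
  also have "\<dots> = emeasure (\<mu>\<Sigma> \<Otimes>\<^sub>M lborel) ((\<lambda>(\<sigma>, t). \<sigma> + \<psi> t) -` B \<inter> (ker \<times> {0..<period}))"
    using Omega.emeasure_space_1 by (simp add: shifted_preimage_measure_zero[OF assms])
  finally have "emeasure \<mu>\<Omega> B * period
      = emeasure (\<mu>\<Sigma> \<Otimes>\<^sub>M lborel) ((\<lambda>(\<sigma>, t). \<sigma> + \<psi> t) -` B \<inter> (ker \<times> {0..<period}))" .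
  moreover have "ennreal (1 / period) * ennreal period = 1"
    using period_pos by (simp flip: ennreal_mult)
  ultimately show ?thesis by (metis mult.assoc mult.commute mult_1)
qed

end

theorem lemma2p2:
  fixes \<psi> :: "real \<Rightarrow> 'a::{metric_space, ab_group_add}"
    and \<phi> :: "'a \<Rightarrow> complex"
    and \<alpha> :: real
    and \<mu>\<Omega> \<mu>\<Sigma> :: "'a measure"
  assumes grp: "compact_metric_ab_group TYPE('a)"
    and \<psi>_cont: "continuous_on UNIV \<psi>"
    and \<psi>_hom: "\<And>s t. \<psi> (s + t) = \<psi> s + \<psi> t"
    and \<psi>_dense: "closure (range \<psi>) = UNIV"
    and haar\<Omega>: "haar_prob UNIV \<mu>\<Omega>"
    and \<phi>_char: "character \<phi>"
    and \<phi>_nontriv: "\<exists>\<omega>. \<phi> \<omega> \<noteq> 1"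
    and \<alpha>: "\<And>t. \<phi> (\<psi> t) = cis (\<alpha> * t)"
    and haar\<Sigma>: "haar_prob {\<omega>. \<phi> \<omega> = 1} \<mu>\<Sigma>"
  defines "S \<equiv> 2 * pi / \<bar>\<alpha>\<bar>"
  defines "\<Phi> \<equiv> (\<lambda>(\<sigma>, t). \<sigma> + \<psi> t)"
  shows "bij_betw \<Phi> ({\<omega>. \<phi> \<omega> = 1} \<times> {0..<S}) UNIV
       \<and> the_inv_into ({\<omega>. \<phi> \<omega> = 1} \<times> {0..<S}) \<Phi> \<in> borel_measurable borel
       \<and> (\<forall>B \<in> sets borel.
            emeasure \<mu>\<Omega> B
              = ennreal (1 / S) * emeasure (\<mu>\<Sigma> \<Otimes>\<^sub>M lborel)
                  (\<Phi> -` B \<inter> ({\<omega>. \<phi> \<omega> = 1} \<times> {0..<S})))"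
proof -
  interpret haar_flow \<psi> \<phi> \<alpha> \<mu>\<Omega> \<mu>\<Sigma>
    by unfold_locales (use grp \<psi>_cont \<psi>_hom \<psi>_dense haar\<Omega> \<phi>_char \<phi>_nontriv \<alpha> haar\<Sigma> in auto)
  have "S = period" and "\<Phi> = (\<lambda>(\<sigma>, t). \<sigma> + \<psi> t)" and "{\<omega>. \<phi> \<omega> = 1} = ker"
    by (simp_all add: S_def period_def \<Phi>_def ker_def)
  then show ?thesis
    using bij_betw_flow the_inv_into_flow borel_measurable_flow_inverse emeasure_haar_eq_flow_preimage
    by simp
qed

end
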